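(* Let $x\in\mathbb R^N$ be a vector with block structure $\mathcal B=(\mathcal B_1,\dots,\mathcal B_B)$ and let $\omega=(\omega_1,\dots,\omega_B)$ be weights with $\omega_b\ge 1$. Let $s>\|\omega\|_\infty^2$. Then for $q<p\le 2$ and any norm $\|\cdot\|_r$ used on the blocks, $$\sigma_s(x)_{r,p}^{(\omega)}\le \widetilde\sigma_s(x)_{r,p}^{(\omega)}\le (s-\|\omega\|_\infty^2)^{\frac1p-\frac1q}\,\|x\|_{r,q}^{(\omega)}.$$
   Context: Block structure: $\mathcal B=(\mathcal B_1,\dots,\mathcal B_B)$ is a partition of $\{1,\dots,N\}$; for $x\in\mathbb R^N$, $x[b]=x[\mathcal B_b]$ is the restriction of $x$ to block $b$; for $S\subseteq\{1,\dots,B\}$, $x[S]$ is the vector equal to $x$ on the blocks indexed by $S$ and $0$ elsewhere. Weights $\omega_b\ge1$, $\|\omega\|_\infty=\max_b\omega_b$, $\omega(S)=\sum_{b\in S}\omega_b^2$. For $p>0$ and a block norm $\|\cdot\|_r$: $\|x\|_{r,p}^{(\omega)}=\big(\sum_{b}\omega_b^{2-p}\|x[b]\|_r^p\big)^{1/p}$. Weighted block sparsity: $\|x\|_0^{(\omega)}=\omega(\{b:x[b]\neq0\})$. Best weighted $s$-block approximation error: $\sigma_s(x)_{r,p}^{(\omega)}=\inf\{\|x-z\|_{r,p}^{(\omega)}:\|z\|_0^{(\omega)}\le s\}$. Quasi-best approximation: let $\pi$ be a permutation of $\{1,\dots,B\}$ with $\|x[\pi(1)]\|_r/\omega_{\pi(1)}\ge\|x[\pi(2)]\|_r/\omega_{\pi(2)}\ge\cdots$;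 for $s\ge\|\omega\|_\infty^2$ let $k_s=\max\{k:\sum_{i=1}^k\omega_{\pi(i)}^2\le s\}$, $S=\{\pi(1),\dots,\pi(k_s)\}$, and $\widetilde\sigma_s(x)_{r,p}^{(\omega)}=\|x-x[S]\|_{r,p}^{(\omega)}$. *)

theory Defs
  imports Complex_Main
begin

definition is_vec :: "nat \<Rightarrow> (nat \<Rightarrow> real) \<Rightarrow> bool" where
  "is_vec N x \<longleftrightarrow> (\<forall>i\<ge>N. x i = 0)"

definition block_partition :: "nat \<Rightarrow> nat \<Rightarrow> (nat \<Rightarrow> nat set) \<Rightarrow> bool" where
  "block_partition N B blk \<longleftrightarrow>
     (\<forall>b<B. blk b \<noteq> {}) \<and>
     (\<forall>b<B. \<forall>c<B. b \<noteq> c \<longrightarrow> blk b \<inter> blk c = {}) \<and>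
     (\<Union>b<B. blk b) = {..<N}"

definition is_norm_on :: "nat \<Rightarrow> ((nat \<Rightarrow> real) \<Rightarrow> real) \<Rightarrow> bool" where
  "is_norm_on N nrm \<longleftrightarrow>
     (\<forall>v. is_vec N v \<longrightarrow> nrm v \<ge> 0 \<and> (nrm v = 0 \<longleftrightarrow> v = (\<lambda>_. 0))) \<and>
     (\<forall>v c. is_vec N v \<longrightarrow> nrm (\<lambda>i. c * v i) = \<bar>c\<bar> * nrm v) \<and>
     (\<forall>v w. is_vec N v \<longrightarrow> is_vec N w \<longrightarrow> nrm (\<lambda>i. v i + w i) \<le> nrm v + nrm w)"

definition restr :: "(nat \<Rightarrow> nat set) \<Rightarrow> nat set \<Rightarrow> (nat \<Rightarrow> real) \<Rightarrow> nat \<Rightarrow> real" where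
  "restr blk S x = (\<lambda>i. if (\<exists>b\<in>S. i \<in> blk b) then x i else 0)"

definition blockv :: "(nat \<Rightarrow> nat set) \<Rightarrow> nat \<Rightarrow> (nat \<Rightarrow> real) \<Rightarrow> nat \<Rightarrow> real" where
  "blockv blk b x = restr blk {b} x"

definition winf :: "nat \<Rightarrow> (nat \<Rightarrow> real) \<Rightarrow> real" where
  "winf B \<omega> = Max (insert 0 (\<omega> ` {..<B}))"

definition wset :: "(nat \<Rightarrow> real) \<Rightarrow> nat set \<Rightarrow> real" where
  "wset \<omega> S = (\<Sum>b\<in>S. (\<omega> b)\<^sup>2)"

definition wnorm :: "nat \<Rightarrow> (nat \<Rightarrow> nat set) \<Rightarrow> ((nat \<Rightarrow> real) \<Rightarrow> real) \<Rightarrow> (nat \<Rightarrow> real)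
                      \<Rightarrow> real \<Rightarrow> (nat \<Rightarrow> real) \<Rightarrow> real" where
  "wnorm B blk nrm \<omega> p x =
     (\<Sum>b<B. \<omega> b powr (2 - p) * nrm (blockv blk b x) powr p) powr (1 / p)"

definition wsparsity :: "nat \<Rightarrow> (nat \<Rightarrow> nat set) \<Rightarrow> (nat \<Rightarrow> real) \<Rightarrow> (nat \<Rightarrow> real) \<Rightarrow> real" where
  "wsparsity B blk \<omega> x = wset \<omega> {b. b < B \<and> blockv blk b x \<noteq> (\<lambda>_. 0)}"

definition sigma_best :: "nat \<Rightarrow> nat \<Rightarrow> (nat \<Rightarrow> nat set) \<Rightarrow> ((nat \<Rightarrow> real) \<Rightarrow> real)
                      \<Rightarrow> (nat \<Rightarrow> real) \<Rightarrow> real \<Rightarrow> real \<Rightarrow> (nat \<Rightarrow> real) \<Rightarrow> real" where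
  "sigma_best N B blk nrm \<omega> p s x =
     Inf {wnorm B blk nrm \<omega> p (\<lambda>i. x i - z i) | z. is_vec N z \<and> wsparsity B blk \<omega> z \<le> s}"

definition sorting_perm :: "nat \<Rightarrow> (nat \<Rightarrow> nat set) \<Rightarrow> ((nat \<Rightarrow> real) \<Rightarrow> real)
                      \<Rightarrow> (nat \<Rightarrow> real) \<Rightarrow> (nat \<Rightarrow> real) \<Rightarrow> (nat \<Rightarrow> nat) \<Rightarrow> bool" where
  "sorting_perm B blk nrm \<omega> x \<pi> \<longleftrightarrow>
     bij_betw \<pi> {..<B} {..<B} \<and>
     (\<forall>i j. i \<le> j \<longrightarrow> j < B \<longrightarrow>
        nrm (blockv blk (\<pi> j) x) / \<omega> (\<pi> j) \<le> nrm (blockv blk (\<pi> i) x) / \<omega> (\<pi> i))"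

text \<open>k_s (positions are 0-based: the first k entries are \<pi> 0, ..., \<pi> (k-1)).\<close>
definition k_s :: "nat \<Rightarrow> (nat \<Rightarrow> real) \<Rightarrow> (nat \<Rightarrow> nat) \<Rightarrow> real \<Rightarrow> nat" where
  "k_s B \<omega> \<pi> s = Max {k. k \<le> B \<and> (\<Sum>i<k. (\<omega> (\<pi> i))\<^sup>2) \<le> s}"

definition sigma_quasi :: "nat \<Rightarrow> (nat \<Rightarrow> nat set) \<Rightarrow> ((nat \<Rightarrow> real) \<Rightarrow> real)
                      \<Rightarrow> (nat \<Rightarrow> real) \<Rightarrow> (nat \<Rightarrow> nat) \<Rightarrow> real \<Rightarrow> real \<Rightarrow> (nat \<Rightarrow> real) \<Rightarrow> real" where
  "sigma_quasi B blk nrm \<omega> \<pi> p s x =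
     (let S = \<pi> ` {..<k_s B \<omega> \<pi> s}
      in wnorm B blk nrm \<omega> p (\<lambda>i. x i - restr blk S x i))"

end

theory Submission
  imports Defs
begin

text \<open>Order the blocks so that \<open>a i = \<parallel>x[\<pi> i]\<parallel>_r / \<omega>_(\<pi> i)\<close> is nonincreasing and put
  \<open>c i = \<omega>_(\<pi> i)^2\<close>, so that \<open>\<omega>^(2-p) \<parallel>x[b]\<parallel>^p = c i a i^p\<close>.  The quasi-best
  approximation keeps the first \<open>k\<close> blocks, where \<open>k\<close> is maximal with \<open>c 0 + \<dots> + c (k-1) \<le> s\<close>;
  hence \<open>c 0 + \<dots> + c k > s\<close>.  Every kept term dominates \<open>a k\<close>, so
  \<open>a k^q \<le> \<parallel>x\<parallel>_q^q / s\<close>, and every discarded term satisfies \<open>a i^p \<le> a k^(p-q) a i^q\<close>;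
  together this gives the tail bound \<open>s^(1/p - 1/q) \<parallel>x\<parallel>_q\<close>, which is even stronger than
  required since \<open>s - \<parallel>\<omega>\<parallel>\<^sub>\<infinity>^2 \<le> s\<close>.  The first inequality holds because the kept part is weighted \<open>s\<close>-sparse.\<close>

lemma nonincreasing_powr_mass_le:
  fixes c a :: "nat \<Rightarrow> real" and k B :: nat and q :: real
  assumes "k < B" and "\<forall>i<B. c i \<ge> 0" and "\<forall>i<B. a i \<ge> 0"
    and "\<forall>i j. i \<le> j \<longrightarrow> j < B \<longrightarrow> a j \<le> a i" and "0 < q"
  shows "a k powr q * (\<Sum>i\<le>k. c i) \<le> (\<Sum>i<B. c i * a i powr q)"
proof -
  have "a k powr q * (\<Sum>i\<le>k. c i) = (\<Sum>i\<le>k. c i * a k powr q)"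
    by (simp add: sum_distrib_right mult.commute)
  also have "\<dots> \<le> (\<Sum>i\<le>k. c i * a i powr q)"
    using assms by (intro sum_mono mult_left_mono powr_mono2) auto
  also have "\<dots> \<le> (\<Sum>i<B. c i * a i powr q)"
    using assms by (intro sum_mono2) auto
  finally show ?thesis .
qed

lemma nonincreasing_tail_powr_le:
  fixes c a :: "nat \<Rightarrow> real" and k B :: nat and T p q :: real
  assumes kB: "k < B" and c: "\<forall>i<B. c i \<ge> 0" and a: "\<forall>i<B. a i \<ge> 0"
    and mono: "\<forall>i j. i \<le> j \<longrightarrow> j < B \<longrightarrow> a j \<le> a i"
    and T: "0 < T" "T \<le> (\<Sum>i\<le>k. c i)" and q: "0 < q" "q < p"
  shows "(\<Sum>i\<in>{k..<B}. c i * a i powr p) powr (1/p)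
          \<le> T powr (1/p - 1/q) * (\<Sum>i<B. c i * a i powr q) powr (1/q)"
proof -
  define Q where "Q = (\<Sum>i<B. c i * a i powr q)"
  define m where "m = a k"
  have "Q \<ge> 0" unfolding Q_def using c by (intro sum_nonneg) simp
  have "m powr q * T \<le> m powr q * (\<Sum>i\<le>k. c i)"
    using T by (intro mult_left_mono) auto
  also have "\<dots> \<le> Q"
    unfolding Q_def m_def using kB c a mono q(1) by (rule nonincreasing_powr_mass_le)
  finally have "m powr q * T \<le> Q" .
  hence mQ: "m powr q \<le> Q / T" using T by (simp add: field_simps)
  have "(\<Sum>i\<in>{k..<B}. c i * a i powr p) \<le> (\<Sum>i\<in>{k..<B}. m powr (p - q) * (c i * a i powr q))"
  proof (intro sum_mono)
    fix i assume i: "i \<in> {k..<B}"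
    have "a i powr (p - q) \<le> m powr (p - q)"
      using mono a i q unfolding m_def by (intro powr_mono2) auto
    hence "(c i * a i powr q) * a i powr (p - q) \<le> (c i * a i powr q) * m powr (p - q)"
      using c i by (intro mult_left_mono) auto
    then show "c i * a i powr p \<le> m powr (p - q) * (c i * a i powr q)"
      by (simp add: powr_add[symmetric] mult_ac)
  qed
  also have "\<dots> \<le> m powr (p - q) * Q"
    unfolding Q_def sum_distrib_left[symmetric] using kB c
    by (intro mult_left_mono sum_mono2) auto
  also have "m powr (p - q) = (m powr q) powr ((p - q) / q)"
    using q by (simp add: powr_powr)
  also have "\<dots> \<le> (Q / T) powr ((p - q) / q)"
    using mQ q by (intro powr_mono2) auto
  finally have tail: "(\<Sum>i\<in>{k..<B}. c i * a i powr p) \<le> (Q / T) powr ((p - q) / q) * Q"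
    using \<open>Q \<ge> 0\<close> by (simp add: mult_right_mono)
  have "(\<Sum>i\<in>{k..<B}. c i * a i powr p) powr (1/p) \<le> ((Q / T) powr ((p - q) / q) * Q) powr (1/p)"
    using tail c q by (intro powr_mono2 sum_nonneg) auto
  also have "\<dots> = Q powr ((p - q) / q / p + 1/p) / T powr ((p - q) / q / p)"
    using \<open>Q \<ge> 0\<close> T by (simp add: powr_mult powr_powr powr_divide powr_add)
  also have "\<dots> = T powr (1/p - 1/q) * Q powr (1/q)"
  proof -
    have "(p - q) / q / p + 1/p = 1/q" and "(p - q) / q / p = - (1/p - 1/q)"
      using q by (simp_all add: field_simps)
    then show ?thesis by (simp only: powr_minus divide_inverse inverse_inverse_eq mult.commute)
  qed
  finally show ?thesis unfolding Q_def .
qed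

lemma powr_weight_eq:
  fixes w n p :: real
  assumes "w > 0" and "n \<ge> 0"
  shows "w powr (2 - p) * n powr p = w\<^sup>2 * (n / w) powr p"
  using assms by (simp add: powr_divide powr_diff powr_numeral)

lemma blockv_diff_restr_mem:
  assumes "b \<in> S"
  shows "blockv blk b (\<lambda>i. x i - restr blk S x i) = (\<lambda>_. 0)"
  using assms by (auto simp: blockv_def restr_def)

lemma blockv_restr_nonmem:
  assumes "\<And>c. c \<in> S \<Longrightarrow> blk b \<inter> blk c = {}"
  shows "blockv blk b (restr blk S x) = (\<lambda>_. 0)"
  using assms by (fastforce simp: blockv_def restr_def)

lemma blockv_diff_restr_nonmem:
  assumes "\<And>c. c \<in> S \<Longrightarrow> blk b \<inter> blk c = {}"
  shows "blockv blk b (\<lambda>i. x i - restr blk S x i) = blockv blk b x"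
  using assms by (fastforce simp: blockv_def restr_def)

lemma is_vec_restr: "is_vec N x \<Longrightarrow> is_vec N (restr blk S x)"
  unfolding is_vec_def restr_def by auto

lemma wsparsity_restr_le:
  assumes "\<forall>b<B. \<forall>c<B. b \<noteq> c \<longrightarrow> blk b \<inter> blk c = {}" and "S \<subseteq> {..<B}"
  shows "wsparsity B blk \<omega> (restr blk S x) \<le> wset \<omega> S"
proof -
  have "{b. b < B \<and> blockv blk b (restr blk S x) \<noteq> (\<lambda>_. 0)} \<subseteq> S"
  proof (rule subsetI, rule ccontr)
    fix b assume "b \<in> {b. b < B \<and> blockv blk b (restr blk S x) \<noteq> (\<lambda>_. 0)}" "b \<notin> S"
    moreover have "blk b \<inter> blk c = {}" if "c \<in> S" for c
      using assms that \<open>b \<notin> S\<close> \<open>b \<in> _\<close> by blast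
    ultimately show False using blockv_restr_nonmem by blast
  qed
  then show ?thesis
    unfolding wsparsity_def wset_def using assms(2)
    by (intro sum_mono2) (auto intro: finite_subset)
qed

lemma sigma_best_le_wnorm:
  assumes "is_vec N z" and "wsparsity B blk \<omega> z \<le> s"
  shows "sigma_best N B blk nrm \<omega> p s x \<le> wnorm B blk nrm \<omega> p (\<lambda>i. x i - z i)"
  unfolding sigma_best_def
proof (rule cInf_lower)
  show "bdd_below {wnorm B blk nrm \<omega> p (\<lambda>i. x i - z i) |z. is_vec N z \<and> wsparsity B blk \<omega> z \<le> s}"
    by (rule bdd_belowI[of _ 0]) (auto simp: wnorm_def)
qed (use assms in blast)

lemma wnorm_reindex:
  assumes "bij_betw \<pi> {..<B} {..<B}"
  shows "wnorm B blk nrm \<omega> p x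
           = (\<Sum>i<B. \<omega> (\<pi> i) powr (2 - p) * nrm (blockv blk (\<pi> i) x) powr p) powr (1 / p)"
  unfolding wnorm_def by (subst sum.reindex_bij_betw[OF assms, symmetric]) simp

lemma wnorm_diff_restr_prefix:
  assumes "\<forall>b<B. \<forall>c<B. b \<noteq> c \<longrightarrow> blk b \<inter> blk c = {}" and \<pi>: "bij_betw \<pi> {..<B} {..<B}"
    and "k \<le> B" and "nrm (\<lambda>_. 0) = 0"
  shows "wnorm B blk nrm \<omega> p (\<lambda>i. x i - restr blk (\<pi> ` {..<k}) x i)
           = (\<Sum>i\<in>{k..<B}. \<omega> (\<pi> i) powr (2 - p) * nrm (blockv blk (\<pi> i) x) powr p) powr (1 / p)"
proof -
  let ?S = "\<pi> ` {..<k}"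
  have "blockv blk (\<pi> i) (\<lambda>j. x j - restr blk ?S x j) = blockv blk (\<pi> i) x"
    if "k \<le> i" "i < B" for i
  proof (rule blockv_diff_restr_nonmem)
    fix c assume "c \<in> ?S"
    then obtain j where j: "j < k" "c = \<pi> j" by blast
    have "j < B" "i \<noteq> j" using j that \<open>k \<le> B\<close> by auto
    with that have "\<pi> i \<noteq> \<pi> j" "\<pi> i < B" "\<pi> j < B"
      using \<pi> by (auto simp: bij_betw_def inj_on_def)
    then show "blk (\<pi> i) \<inter> blk c = {}" using assms(1) j by blast
  qed
  then have "(\<Sum>i<B. \<omega> (\<pi> i) powr (2 - p) * nrm (blockv blk (\<pi> i) (\<lambda>j. x j - restr blk ?S x j)) powr p)
      = (\<Sum>i<B. if i < k then 0 else \<omega> (\<pi> i) powr (2 - p) * nrm (blockv blk (\<pi> i) x) powr p)"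
    using assms(4) by (intro sum.cong) (auto simp: blockv_diff_restr_mem)
  also have "\<dots> = (\<Sum>i\<in>{k..<B}. \<omega> (\<pi> i) powr (2 - p) * nrm (blockv blk (\<pi> i) x) powr p)"
    by (rule sum.mono_neutral_cong_right) auto
  finally show ?thesis by (simp add: wnorm_reindex[OF \<pi>])
qed

lemma k_s_le:
  assumes "s \<ge> 0"
  shows "k_s B \<omega> \<pi> s \<le> B" and "(\<Sum>i<k_s B \<omega> \<pi> s. (\<omega> (\<pi> i))\<^sup>2) \<le> s"
    and "k_s B \<omega> \<pi> s < B \<Longrightarrow> s < (\<Sum>i\<le>k_s B \<omega> \<pi> s. (\<omega> (\<pi> i))\<^sup>2)"
proof -
  let ?K = "{k. k \<le> B \<and> (\<Sum>i<k. (\<omega> (\<pi> i))\<^sup>2) \<le> s}"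
  have fin: "finite ?K" by (rule finite_subset[of _ "{..B}"]) auto
  have "0 \<in> ?K" using assms by simp
  then have mem: "k_s B \<omega> \<pi> s \<in> ?K"
    unfolding k_s_def using fin by (intro Max_in) auto
  have max: "\<And>j. j \<in> ?K \<Longrightarrow> j \<le> k_s B \<omega> \<pi> s"
    unfolding k_s_def using fin by (rule Max_ge)
  from mem show "k_s B \<omega> \<pi> s \<le> B" and "(\<Sum>i<k_s B \<omega> \<pi> s. (\<omega> (\<pi> i))\<^sup>2) \<le> s"
    by simp_all
  show "s < (\<Sum>i\<le>k_s B \<omega> \<pi> s. (\<omega> (\<pi> i))\<^sup>2)" if "k_s B \<omega> \<pi> s < B"
    using max[of "Suc (k_s B \<omega> \<pi> s)"] that by (force simp: lessThan_Suc_atMost)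
qed

lemma sigma_best_le_sigma_quasi:
  assumes "\<forall>b<B. \<forall>c<B. b \<noteq> c \<longrightarrow> blk b \<inter> blk c = {}" and \<pi>: "bij_betw \<pi> {..<B} {..<B}"
    and "is_vec N x" and "s \<ge> 0"
  shows "sigma_best N B blk nrm \<omega> p s x \<le> sigma_quasi B blk nrm \<omega> \<pi> p s x"
proof -
  define k where "k = k_s B \<omega> \<pi> s"
  have "k \<le> B" using k_s_le(1)[OF \<open>s \<ge> 0\<close>] by (simp add: k_def)
  then have inj: "inj_on \<pi> {..<k}" and sub: "\<pi> ` {..<k} \<subseteq> {..<B}"
    using \<pi> by (auto simp: bij_betw_def intro: inj_on_subset)
  have "wsparsity B blk \<omega> (restr blk (\<pi> ` {..<k}) x) \<le> wset \<omega> (\<pi> ` {..<k})"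
    using assms(1) sub by (rule wsparsity_restr_le)
  also have "\<dots> = (\<Sum>i<k. (\<omega> (\<pi> i))\<^sup>2)"
    unfolding wset_def using inj by (simp add: sum.reindex)
  also have "\<dots> \<le> s" using k_s_le(2)[OF \<open>s \<ge> 0\<close>] by (simp add: k_def)
  finally show ?thesis
    unfolding sigma_quasi_def Let_def k_def[symmetric]
    using assms(3) by (intro sigma_best_le_wnorm is_vec_restr)
qed

lemma sigma_quasi_le_powr_wnorm:
  assumes "\<forall>b<B. \<forall>c<B. b \<noteq> c \<longrightarrow> blk b \<inter> blk c = {}" and nrm: "is_norm_on N nrm"
    and \<omega>: "\<forall>b<B. \<omega> b > 0" and x: "is_vec N x" and sorted: "sorting_perm B blk nrm \<omega> x \<pi>"
    and T: "0 < T" "T \<le> s" and q: "0 < q" "q < p"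
  shows "sigma_quasi B blk nrm \<omega> \<pi> p s x \<le> T powr (1/p - 1/q) * wnorm B blk nrm \<omega> q x"
proof -
  define k where "k = k_s B \<omega> \<pi> s"
  define c where "c i = (\<omega> (\<pi> i))\<^sup>2" for i
  define a where "a i = nrm (blockv blk (\<pi> i) x) / \<omega> (\<pi> i)" for i
  have \<pi>: "bij_betw \<pi> {..<B} {..<B}" and mono: "\<forall>i j. i \<le> j \<longrightarrow> j < B \<longrightarrow> a j \<le> a i"
    using sorted by (simp_all add: sorting_perm_def a_def)
  have \<omega>\<pi>: "\<omega> (\<pi> i) > 0" if "i < B" for i using \<omega> \<pi> that by (auto dest: bij_betwE)
  have nrm_ge: "nrm (blockv blk b x) \<ge> 0" for b
    using nrm is_vec_restr[OF x] by (simp add: is_norm_on_def blockv_def)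
  have "nrm (\<lambda>_. 0) = 0" using nrm by (simp add: is_norm_on_def is_vec_def)
  have terms: "\<omega> (\<pi> i) powr (2 - r) * nrm (blockv blk (\<pi> i) x) powr r = c i * a i powr r"
    if "i < B" for i r
    unfolding a_def c_def using \<omega>\<pi>[OF that] nrm_ge by (rule powr_weight_eq)
  have c: "\<forall>i<B. c i \<ge> 0" and a: "\<forall>i<B. a i \<ge> 0"
    using \<omega>\<pi> nrm_ge by (auto simp: c_def a_def intro: divide_nonneg_pos)
  have "k \<le> B" using k_s_le(1) T by (simp add: k_def)
  have quasi: "sigma_quasi B blk nrm \<omega> \<pi> p s x = (\<Sum>i\<in>{k..<B}. c i * a i powr p) powr (1/p)"
    unfolding sigma_quasi_def Let_def k_def[symmetric]
    using wnorm_diff_restr_prefix[where nrm = nrm, OF assms(1) \<pi> \<open>k \<le> B\<close> \<open>nrm (\<lambda>_. 0) = 0\<close>] terms by simp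
  have norm_q: "wnorm B blk nrm \<omega> q x = (\<Sum>i<B. c i * a i powr q) powr (1/q)"
    using wnorm_reindex[OF \<pi>] terms by simp
  show ?thesis
  proof (cases "k < B")
    case True
    have "s < (\<Sum>i\<le>k. c i)"
      using k_s_le(3)[of s B \<omega> \<pi>] T True by (simp add: k_def c_def)
    then have "T \<le> (\<Sum>i\<le>k. c i)" using T by linarith
    from nonincreasing_tail_powr_le[OF True c a mono T(1) this q] show ?thesis
      unfolding quasi norm_q .
  qed (use \<open>k \<le> B\<close> quasi in \<open>simp add: wnorm_def\<close>)
qed

theorem mainTheorem1:
  fixes N B :: nat and blk :: "nat \<Rightarrow> nat set" and nrm :: "(nat \<Rightarrow> real) \<Rightarrow> real"
    and \<omega> x :: "nat \<Rightarrow> real" and \<pi> :: "nat \<Rightarrow> nat" and s p q :: real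
  assumes "block_partition N B blk"
    and "is_norm_on N nrm"
    and "\<forall>b<B. \<omega> b \<ge> 1"
    and "is_vec N x"
    and "s > (winf B \<omega>)\<^sup>2"
    and "0 < q" and "q < p" and "p \<le> 2"
    and "sorting_perm B blk nrm \<omega> x \<pi>"
  shows "sigma_best N B blk nrm \<omega> p s x \<le> sigma_quasi B blk nrm \<omega> \<pi> p s x
       \<and> sigma_quasi B blk nrm \<omega> \<pi> p s x
           \<le> (s - (winf B \<omega>)\<^sup>2) powr (1 / p - 1 / q) * wnorm B blk nrm \<omega> q x"
proof
  have disjoint: "\<forall>b<B. \<forall>c<B. b \<noteq> c \<longrightarrow> blk b \<inter> blk c = {}"
    using assms(1) by (simp add: block_partition_def)
  have \<pi>: "bij_betw \<pi> {..<B} {..<B}" using assms(9) by (simp add: sorting_perm_def)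
  have T: "0 < s - (winf B \<omega>)\<^sup>2" "s - (winf B \<omega>)\<^sup>2 \<le> s" using assms(5) by simp_all
  show "sigma_best N B blk nrm \<omega> p s x \<le> sigma_quasi B blk nrm \<omega> \<pi> p s x"
    using disjoint \<pi> assms(4) by (rule sigma_best_le_sigma_quasi) (use T in linarith)
  have \<omega>: "\<forall>b<B. \<omega> b > 0" using assms(3) by fastforce
  show "sigma_quasi B blk nrm \<omega> \<pi> p s x
           \<le> (s - (winf B \<omega>)\<^sup>2) powr (1 / p - 1 / q) * wnorm B blk nrm \<omega> q x"
    using disjoint assms(2) \<omega> assms(4,9) T assms(6,7) by (rule sigma_quasi_le_powr_wnorm)
qed

end
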